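(* Every left-invariant parak\"ahler structure on a nilpotent Lie group is Ricci-flat.
   Context: A parak\"ahler structure on a $2n$-manifold consists of a splitting $TM=V\oplus H$ into rank-$n$ distributions and a pseudoriemannian metric $g$ with $g(KX,KY)=-g(X,Y)$ for $K=\mathrm{id}_V-\mathrm{id}_H$, such that the two-form $F(X,Y)=g(KX,Y)$ is parallel for the Levi-Civita connection of $g$. Left-invariant means $V$, $H$ and $g$ are invariant under left translations. *)

theory Defs
  imports "HOL-Analysis.Analysis"
begin

text \<open>Left-invariant objects on a Lie group are encoded on its Lie algebra,
  a finite-dimensional real vector space, here real^'n with a bracket.\<close>

definition lie_algebra :: "(real^'n \<Rightarrow> real^'n \<Rightarrow> real^'n) \<Rightarrow> bool" where
  "lie_algebra br \<longleftrightarrow> bilinear br \<and> (\<forall>x. br x x = 0) \<and>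
     (\<forall>x y z. br x (br y z) + br y (br z x) + br z (br x y) = 0)"

fun lcs :: "(real^'n \<Rightarrow> real^'n \<Rightarrow> real^'n) \<Rightarrow> nat \<Rightarrow> (real^'n) set" where
  "lcs br 0 = UNIV"
| "lcs br (Suc k) = span {br x y | x y. y \<in> lcs br k}"

definition nilpotent_lie_algebra :: "(real^'n \<Rightarrow> real^'n \<Rightarrow> real^'n) \<Rightarrow> bool" where
  "nilpotent_lie_algebra br \<longleftrightarrow> lie_algebra br \<and> (\<exists>k. lcs br k = {0})"

definition para_splitting :: "(real^'n) set \<Rightarrow> (real^'n) set \<Rightarrow> bool" where
  "para_splitting V H \<longleftrightarrow> subspace V \<and> subspace H \<and> V \<inter> H = {0} \<and>
     (\<forall>x. \<exists>v\<in>V. \<exists>h\<in>H. x = v + h) \<and> dim V = dim H"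

definition paraK :: "(real^'n) set \<Rightarrow> (real^'n) set \<Rightarrow> real^'n \<Rightarrow> real^'n" where
  "paraK V H x = (THE y. \<exists>v\<in>V. \<exists>h\<in>H. x = v + h \<and> y = v - h)"

definition pseudo_metric :: "(real^'n \<Rightarrow> real^'n \<Rightarrow> real) \<Rightarrow> bool" where
  "pseudo_metric g \<longleftrightarrow> bilinear g \<and> (\<forall>x y. g x y = g y x) \<and>
     (\<forall>x. (\<forall>y. g x y = 0) \<longrightarrow> x = 0)"

text \<open>Levi-Civita connection of a left-invariant metric, restricted to left-invariant
  vector fields: torsion-free and metric (g(Y,Z) is constant for invariant fields).
  By the Koszul formula such D exists and is unique.\<close>
definition levi_civita ::
  "(real^'n \<Rightarrow> real^'n \<Rightarrow> real^'n) \<Rightarrow> (real^'n \<Rightarrow> real^'n \<Rightarrow> real) \<Rightarrow>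
   (real^'n \<Rightarrow> real^'n \<Rightarrow> real^'n) \<Rightarrow> bool" where
  "levi_civita br g D \<longleftrightarrow> bilinear D \<and>
     (\<forall>X Y. D X Y - D Y X = br X Y) \<and>
     (\<forall>X Y Z. g (D X Y) Z + g Y (D X Z) = 0)"

definition parakaehler_form ::
  "(real^'n \<Rightarrow> real^'n \<Rightarrow> real) \<Rightarrow> (real^'n) set \<Rightarrow> (real^'n) set \<Rightarrow> real^'n \<Rightarrow> real^'n \<Rightarrow> real" where
  "parakaehler_form g V H X Y = g (paraK V H X) Y"

definition left_inv_parakaehler ::
  "(real^'n \<Rightarrow> real^'n \<Rightarrow> real^'n) \<Rightarrow> (real^'n) set \<Rightarrow> (real^'n) set \<Rightarrow>
   (real^'n \<Rightarrow> real^'n \<Rightarrow> real) \<Rightarrow> bool" where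
  "left_inv_parakaehler br V H g \<longleftrightarrow> para_splitting V H \<and> pseudo_metric g \<and>
     (\<forall>X Y. g (paraK V H X) (paraK V H Y) = - g X Y) \<and>
     (\<forall>D. levi_civita br g D \<longrightarrow>
        (\<forall>X Y Z. parakaehler_form g V H (D X Y) Z + parakaehler_form g V H Y (D X Z) = 0))"

definition curvature ::
  "(real^'n \<Rightarrow> real^'n \<Rightarrow> real^'n) \<Rightarrow> (real^'n \<Rightarrow> real^'n \<Rightarrow> real^'n) \<Rightarrow>
   real^'n \<Rightarrow> real^'n \<Rightarrow> real^'n \<Rightarrow> real^'n" where
  "curvature br D X Y Z = D X (D Y Z) - D Y (D X Z) - D (br X Y) Z"

definition ricci ::
  "(real^'n \<Rightarrow> real^'n \<Rightarrow> real^'n) \<Rightarrow> (real^'n \<Rightarrow> real^'n \<Rightarrow> real^'n) \<Rightarrow>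
   real^'n \<Rightarrow> real^'n \<Rightarrow> real" where
  "ricci br D Y Z = trace (matrix (\<lambda>X. curvature br D X Y Z))"

end

theory Submission
  imports Defs
begin

text \<open>Parallelism of K = id_V - id_H means that every D_X commutes with K, so D_X preserves V
  and H and the curvature commutes with K. Together with the Bianchi identity and pair symmetry
  this gives 2 Ric(Y, Z) = - tr (K R(Y, K Z)), and cyclicity of the trace gives
  tr (K R(X, Y)) = - tr (K D_[X,Y]). It remains to see that tr (K D_W) = 0 when the Lie algebra
  is nilpotent. Since D_W is g-skew and the g-adjoint of the projection onto H is the projection
  onto V, tr (pr_H D_W) = - tr (pr_V D_W). For W in H the compressions of D_W and ad_W to V agree
  (D_v W lies in H), and the trace of the latter vanishes because ad_W is nilpotent and preserves
  both V and H; symmetrically for W in V.\<close>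

section \<open>Traces of linear endomorphisms\<close>

lemma trace_matrix_eq_sum_axis:
  "trace (matrix (f :: real^'n \<Rightarrow> real^'n)) = (\<Sum>i\<in>UNIV. f (axis i 1) $ i)"
  by (simp add: trace_def matrix_def)

lemma trace_matrix_add:
  "trace (matrix (\<lambda>x. (f :: real^'n \<Rightarrow> real^'n) x + h x)) = trace (matrix f) + trace (matrix h)"
  by (simp add: trace_matrix_eq_sum_axis sum.distrib)

lemma trace_matrix_diff:
  "trace (matrix (\<lambda>x. (f :: real^'n \<Rightarrow> real^'n) x - h x)) = trace (matrix f) - trace (matrix h)"
  by (simp add: trace_matrix_eq_sum_axis sum_subtractf)

lemma trace_matrix_neg:
  "trace (matrix (\<lambda>x. - (f :: real^'n \<Rightarrow> real^'n) x)) = - trace (matrix f)"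
  by (simp add: trace_matrix_eq_sum_axis sum_negf)

lemma trace_matrix_compose_commute:
  fixes f h :: "real^'n \<Rightarrow> real^'n"
  assumes "linear f" "linear h"
  shows "trace (matrix (\<lambda>x. f (h x))) = trace (matrix (\<lambda>x. h (f x)))"
  using trace_mul_sym[of "matrix f" "matrix h"]
  by (simp add: matrix_compose[OF assms(2,1), symmetric] matrix_compose[OF assms, symmetric] o_def)

lemma orthogonal_basis_expansion:
  fixes B :: "'a::euclidean_space set"
  assumes "pairwise orthogonal B" and "x \<in> span B"
  shows "x = (\<Sum>b\<in>B. (b \<bullet> x / (b \<bullet> b)) *\<^sub>R b)"
proof -
  define y where "y = x - (\<Sum>b\<in>B. (b \<bullet> x / (b \<bullet> b)) *\<^sub>R b)"
  have "y \<in> span B"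
    unfolding y_def by (intro span_diff assms span_sum span_scale span_base)
  then have "orthogonal y y"
    using Gram_Schmidt_step[OF assms(1), of y x] y_def by simp
  then show ?thesis by (simp add: y_def orthogonal_def)
qed

lemma trace_matrix_orthogonal_basis:
  fixes f :: "real^'n \<Rightarrow> real^'n"
  assumes orth: "pairwise orthogonal B" and span: "span B = UNIV" and "linear f"
  shows "trace (matrix f) = (\<Sum>b\<in>B. (f b \<bullet> b) / (b \<bullet> b))"
proof -
  interpret f: linear f by fact
  have "f (axis i 1) $ i = (\<Sum>b\<in>B. (b $ i / (b \<bullet> b)) * f b $ i)" for i
  proof -
    have "f (axis i 1) = (\<Sum>b\<in>B. (b \<bullet> axis i 1 / (b \<bullet> b)) *\<^sub>R f b)"
      by (subst orthogonal_basis_expansion[OF orth, of "axis i 1"])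
        (simp_all add: span f.sum f.scale)
    then show ?thesis by (simp add: inner_axis sum_component)
  qed
  then have "trace (matrix f) = (\<Sum>i\<in>UNIV. \<Sum>b\<in>B. (b $ i / (b \<bullet> b)) * f b $ i)"
    by (simp add: trace_matrix_eq_sum_axis)
  also have "\<dots> = (\<Sum>b\<in>B. \<Sum>i\<in>UNIV. (b $ i / (b \<bullet> b)) * f b $ i)"
    by (rule sum.swap)
  also have "\<dots> = (\<Sum>b\<in>B. (f b \<bullet> b) / (b \<bullet> b))"
    by (intro sum.cong refl) (simp add: inner_vec_def sum_divide_distrib mult.commute)
  finally show ?thesis .
qed

lemma linear_funpow: "linear (f :: 'a::real_vector \<Rightarrow> 'a) \<Longrightarrow> linear (f ^^ k)"
  by (induction k) (auto simp: linear_compose linear_iff)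

text \<open>Gram-Schmidt along the flag of kernels of the powers of A: each new basis vector b
  is orthogonal to the previous kernel, which contains A b.\<close>

lemma kernel_funpow_orthogonal_basis:
  fixes A :: "real^'n \<Rightarrow> real^'n"
  assumes lin: "linear A"
  obtains B where "pairwise orthogonal B" "span B = {x. (A ^^ j) x = 0}" "\<And>b. b \<in> B \<Longrightarrow> A b \<bullet> b = 0"
proof (induction j arbitrary: thesis)
  case 0
  show ?case by (rule "0"[of "{}"]) auto
next
  case (Suc j)
  obtain B where B: "pairwise orthogonal B" "span B = {x. (A ^^ j) x = 0}"
    and B_iso: "\<And>b. b \<in> B \<Longrightarrow> A b \<bullet> b = 0"
    using Suc.IH by blast
  define T where "T = {x. (A ^^ Suc j) x = 0}"
  have "subspace T"
    unfolding T_def using linear_subspace_kernel[OF linear_funpow[OF lin], of "Suc j"] by (simp del: funpow.simps)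
  moreover have "B \<subseteq> T"
  proof
    fix b assume "b \<in> B"
    then have "(A ^^ j) b = 0" using B(2) span_base by blast
    then show "b \<in> T" using linear_0[OF lin] by (simp add: T_def funpow_swap1[symmetric])
  qed
  ultimately have span_BT: "span (B \<union> T) = T"
    by (metis Un_absorb1 span_eq_iff)
  obtain U where U: "U \<inter> insert 0 B = {}" "pairwise orthogonal (B \<union> U)" "span (B \<union> U) = span (B \<union> T)"
    using orthogonal_extension_strong[OF B(1)] by blast
  have "A b \<bullet> b = 0" if "b \<in> U" for b
  proof -
    have "b \<in> T" using U(3) span_BT span_base[of b "B \<union> U"] that by blast
    then have "A b \<in> span B" using B(2) by (simp add: T_def funpow_swap1)
    moreover have "orthogonal b y" if "y \<in> B" for y
    proof -
      have "b \<noteq> y" using U(1) \<open>b \<in> U\<close> that by blast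
      then show ?thesis using U(2) \<open>b \<in> U\<close> that unfolding pairwise_def by blast
    qed
    ultimately have "orthogonal b (A b)"
      by (rule orthogonal_to_span)
    then show ?thesis by (simp add: orthogonal_def inner_commute)
  qed
  then show ?case
    using Suc.prems[of "B \<union> U"] U(2,3) span_BT B_iso by (auto simp: T_def)
qed

lemma trace_matrix_nilpotent:
  fixes A :: "real^'n \<Rightarrow> real^'n"
  assumes "linear A" and "\<And>x. (A ^^ m) x = 0"
  shows "trace (matrix A) = 0"
proof -
  obtain B where "pairwise orthogonal B" "span B = {x. (A ^^ m) x = 0}" "\<And>b. b \<in> B \<Longrightarrow> A b \<bullet> b = 0"
    using kernel_funpow_orthogonal_basis[OF assms(1), of m] by blast
  then show ?thesis
    using trace_matrix_orthogonal_basis[OF _ _ assms(1)] assms(2) by simp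
qed

lemma trace_matrix_compress_projection:
  fixes P E :: "real^'n \<Rightarrow> real^'n"
  assumes "linear P" "linear E" and "\<And>x. P (P x) = P x"
  shows "trace (matrix (\<lambda>x. P (E x))) = trace (matrix (\<lambda>x. P (E (P x))))"
proof -
  have "linear (\<lambda>x. P (E x))"
    using linear_compose[OF assms(2,1)] by (simp add: o_def)
  then have "trace (matrix (\<lambda>x. P (P (E x)))) = trace (matrix (\<lambda>x. P (E (P x))))"
    by (rule trace_matrix_compose_commute[OF assms(1)])
  then show ?thesis by (simp add: assms(3))
qed

lemma trace_matrix_split_projections:
  fixes P Q A :: "real^'n \<Rightarrow> real^'n"
  assumes "linear P" "linear Q" "linear A"
    and "\<And>x. P (P x) = P x" "\<And>x. Q (Q x) = Q x" "\<And>x. P x + Q x = x"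
  shows "trace (matrix A) = trace (matrix (\<lambda>x. P (A (P x)))) + trace (matrix (\<lambda>x. Q (A (Q x))))"
proof -
  have "A x = P (A x) + Q (A x)" for x using assms(6) by simp
  then have "trace (matrix A) = trace (matrix (\<lambda>x. P (A x))) + trace (matrix (\<lambda>x. Q (A x)))"
    using trace_matrix_add[of "\<lambda>x. P (A x)" "\<lambda>x. Q (A x)"] by simp
  then show ?thesis
    using trace_matrix_compress_projection[OF assms(1,3,4)]
      trace_matrix_compress_projection[OF assms(2,3,5)] by simp
qed

lemma trace_matrix_nilpotent_compression:
  fixes A P :: "real^'n \<Rightarrow> real^'n"
  assumes "linear A" "linear P"
    and "\<And>x. P x \<in> S" "\<And>y. y \<in> S \<Longrightarrow> P y = y" "\<And>y. y \<in> S \<Longrightarrow> A y \<in> S"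
    and "\<And>x. (A ^^ m) x = 0"
  shows "trace (matrix (\<lambda>x. P (A (P x)))) = 0"
proof -
  define f where "f x = P (A (P x))" for x
  have "linear f"
    unfolding f_def using linear_compose[OF linear_compose[OF assms(2,1)] assms(2)] by (simp add: o_def)
  moreover have on_S: "(f ^^ j) y = (A ^^ j) y \<and> (A ^^ j) y \<in> S" if "y \<in> S" for j y
    using that by (induction j) (simp_all add: f_def assms(4,5))
  have "(f ^^ Suc m) x = 0" for x
    using on_S[of "f x" m] assms(3,6) by (simp add: f_def funpow_swap1)
  ultimately show ?thesis
    using trace_matrix_nilpotent unfolding f_def by blast
qed

lemma linear_functional_eq_sum_axis:
  fixes \<phi> :: "real^'n \<Rightarrow> real"
  assumes "linear \<phi>"
  shows "\<phi> x = (\<Sum>j\<in>UNIV. x $ j * \<phi> (axis j 1))"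
proof -
  interpret \<phi>: linear \<phi> by fact
  have "\<phi> x = \<phi> (\<Sum>j\<in>UNIV. x $ j *\<^sub>R axis j 1)"
    using basis_expansion[of x] by (simp add: scalar_mult_eq_scaleR)
  then show ?thesis by (simp add: \<phi>.sum \<phi>.scale)
qed

lemma pseudo_metric_dual_basis:
  fixes g :: "real^'n \<Rightarrow> real^'n \<Rightarrow> real"
  assumes "pseudo_metric g"
  obtains w where "\<And>i x. g x (w i) = x $ i"
proof -
  have bil: "bilinear g" and sym: "\<And>x y. g x y = g y x"
    and nondeg: "\<And>x. \<forall>y. g x y = 0 \<Longrightarrow> x = 0"
    using assms unfolding pseudo_metric_def by auto
  interpret right: linear "\<lambda>y. g x y" for x using bil by (simp add: bilinear_def)
  have expand: "g x w = (\<Sum>j\<in>UNIV. x $ j * g (axis j 1) w)" for x w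
    by (rule linear_functional_eq_sum_axis[of "\<lambda>x. g x w"]) (use bil in \<open>simp add: bilinear_def\<close>)
  define \<Phi> where "\<Phi> w = (\<chi> j. g (axis j 1) w)" for w
  have lin: "linear \<Phi>"
    unfolding \<Phi>_def by (intro linearI) (simp_all add: vec_eq_iff right.add right.scale)
  have "inj \<Phi>"
    unfolding linear_injective_0[OF lin]
  proof (intro allI impI)
    fix w assume "\<Phi> w = 0"
    then have "g x w = 0" for x using expand[of x w] by (simp add: \<Phi>_def vec_eq_iff)
    then show "w = 0" using nondeg[of w] sym by simp
  qed
  then have "surj \<Phi>" using linear_injective_imp_surjective[OF lin] by blast
  have dual: "\<exists>w. \<forall>x. g x w = x $ i" for i
  proof -
    obtain w where w: "\<Phi> w = axis i 1" using \<open>surj \<Phi>\<close> by (metis surjD)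
    have "g x w = x $ i" for x
    proof -
      have "g x w = (\<Sum>j\<in>UNIV. x $ j * \<Phi> w $ j)" using expand[of x w] by (simp add: \<Phi>_def)
      also have "\<dots> = (\<Sum>j\<in>UNIV. if j = i then x $ j else 0)"
        using w by (intro sum.cong refl) (simp add: axis_def)
      finally show ?thesis by simp
    qed
    then show ?thesis by blast
  qed
  define w where "w i = (SOME w. \<forall>x. g x w = x $ i)" for i
  have "g x (w i) = x $ i" for i x
    using someI_ex[OF dual[of i]] by (simp add: w_def)
  then show ?thesis by (rule that)
qed

lemma trace_matrix_dual_basis:
  assumes "\<And>i x. g x (w i) = x $ i"
  shows "trace (matrix (f :: real^'n \<Rightarrow> real^'n)) = (\<Sum>i\<in>UNIV. g (f (axis i 1)) (w i))"
  by (simp add: trace_matrix_eq_sum_axis assms)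

lemma trace_matrix_adjoint:
  fixes g :: "real^'n \<Rightarrow> real^'n \<Rightarrow> real" and A B :: "real^'n \<Rightarrow> real^'n"
  assumes pm: "pseudo_metric g" and "linear B"
    and adj: "\<And>x y. g (A x) y = g x (B y)"
  shows "trace (matrix A) = trace (matrix B)"
proof -
  have bil: "bilinear g" and sym: "\<And>x y. g x y = g y x"
    using pm unfolding pseudo_metric_def by auto
  obtain w where w: "\<And>i x. g x (w i) = x $ i"
    using pseudo_metric_dual_basis[OF pm] by blast
  have w_sym: "w i $ k = w k $ i" for i k
    using w[of "w k" i] w[of "w i" k] sym by metis
  have "trace (matrix A) = (\<Sum>i\<in>UNIV. g (B (w i)) (axis i 1))"
    unfolding trace_matrix_dual_basis[where g=g and w=w, OF w]
    by (intro sum.cong refl) (metis adj sym)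
  also have "\<dots> = (\<Sum>i\<in>UNIV. \<Sum>k\<in>UNIV. w k $ i * g (B (axis k 1)) (axis i 1))"
  proof (intro sum.cong refl)
    fix i
    have "linear (\<lambda>x. g (B x) (axis i 1))"
      using linear_compose[OF \<open>linear B\<close>, of "\<lambda>x. g x (axis i 1)"] bil
      by (simp add: bilinear_def o_def)
    from linear_functional_eq_sum_axis[OF this, of "w i"]
    show "g (B (w i)) (axis i 1) = (\<Sum>k\<in>UNIV. w k $ i * g (B (axis k 1)) (axis i 1))"
      by (simp add: w_sym)
  qed
  also have "\<dots> = (\<Sum>k\<in>UNIV. \<Sum>i\<in>UNIV. w k $ i * g (B (axis k 1)) (axis i 1))"
    by (rule sum.swap)
  also have "\<dots> = (\<Sum>k\<in>UNIV. g (B (axis k 1)) (w k))"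
  proof (intro sum.cong refl)
    fix k
    show "(\<Sum>i\<in>UNIV. w k $ i * g (B (axis k 1)) (axis i 1)) = g (B (axis k 1)) (w k)"
      by (rule linear_functional_eq_sum_axis[of "g (B (axis k 1))", symmetric])
        (use bil in \<open>simp add: bilinear_def\<close>)
  qed
  also have "\<dots> = trace (matrix B)"
    by (simp add: trace_matrix_dual_basis[where g=g and w=w, OF w])
  finally show ?thesis .
qed

lemma trace_matrix_skew_adjoint:
  fixes g :: "real^'n \<Rightarrow> real^'n \<Rightarrow> real"
  assumes "pseudo_metric g" and "linear A" and "\<And>x y. g (A x) y = - g x (A y)"
  shows "trace (matrix A) = 0"
proof -
  have "trace (matrix A) = trace (matrix (\<lambda>y. - A y))"
  proof (rule trace_matrix_adjoint[OF assms(1)])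
    show "linear (\<lambda>y. - A y)" using linear_compose_neg[OF assms(2)] by simp
    show "g (A x) y = g x (- A y)" for x y
      using assms(3)[of x y] bilinear_rneg[of g x "A y"] assms(1)
      by (simp add: pseudo_metric_def)
  qed
  then show ?thesis by (simp add: trace_matrix_neg)
qed

section \<open>Paracomplex splittings\<close>

definition para_proj_V :: "(real^'n) set \<Rightarrow> (real^'n) set \<Rightarrow> real^'n \<Rightarrow> real^'n" where
  "para_proj_V V H x = (1/2) *\<^sub>R (x + paraK V H x)"

definition para_proj_H :: "(real^'n) set \<Rightarrow> (real^'n) set \<Rightarrow> real^'n \<Rightarrow> real^'n" where
  "para_proj_H V H x = (1/2) *\<^sub>R (x - paraK V H x)"

context
  fixes V H :: "(real^'n) set"
  assumes split: "para_splitting V H"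
begin

lemma para_splitting_decomp:
  obtains v h where "v \<in> V" "h \<in> H" "x = v + h"
  using split unfolding para_splitting_def by blast

lemma paraK_add_components:
  assumes "v \<in> V" "h \<in> H"
  shows "paraK V H (v + h) = v - h"
  unfolding paraK_def
proof (rule the_equality)
  show "\<exists>v'\<in>V. \<exists>h'\<in>H. v + h = v' + h' \<and> v - h = v' - h'" using assms by blast
next
  fix y
  assume "\<exists>v'\<in>V. \<exists>h'\<in>H. v + h = v' + h' \<and> y = v' - h'"
  then obtain v' h' where v': "v' \<in> V" "h' \<in> H" and eq: "v + h = v' + h'" "y = v' - h'"
    by blast
  have "v - v' = h' - h" using eq(1) by (simp add: algebra_simps)
  moreover have "v - v' \<in> V" "h' - h \<in> H"
    using split assms v' by (auto simp: para_splitting_def subspace_diff)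
  ultimately have "v = v'" using split unfolding para_splitting_def by (metis IntI right_minus_eq singletonD)
  then show "y = v - h" using eq by simp
qed

lemma paraK_V: "v \<in> V \<Longrightarrow> paraK V H v = v"
  using paraK_add_components[of v 0] split by (simp add: para_splitting_def subspace_0)

lemma paraK_H: "h \<in> H \<Longrightarrow> paraK V H h = - h"
  using paraK_add_components[of 0 h] split by (simp add: para_splitting_def subspace_0)

lemma linear_paraK: "linear (paraK V H)"
proof (rule linearI)
  fix x y
  obtain v h where x: "v \<in> V" "h \<in> H" "x = v + h" by (rule para_splitting_decomp)
  obtain v' h' where y: "v' \<in> V" "h' \<in> H" "y = v' + h'" by (rule para_splitting_decomp)
  have "v + v' \<in> V" "h + h' \<in> H" using split x y by (auto simp: para_splitting_def subspace_add)
  moreover have "x + y = (v + v') + (h + h')" using x y by (simp add: algebra_simps)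
  ultimately have "paraK V H (x + y) = (v + v') - (h + h')"
    by (simp add: paraK_add_components)
  also have "\<dots> = paraK V H x + paraK V H y"
    using x y by (simp add: paraK_add_components)
  finally show "paraK V H (x + y) = paraK V H x + paraK V H y" .
next
  fix c :: real and x
  obtain v h where x: "v \<in> V" "h \<in> H" "x = v + h" by (rule para_splitting_decomp)
  have "c *\<^sub>R v \<in> V" "c *\<^sub>R h \<in> H" using split x by (auto simp: para_splitting_def subspace_scale)
  then have "paraK V H (c *\<^sub>R v + c *\<^sub>R h) = c *\<^sub>R v - c *\<^sub>R h" by (rule paraK_add_components)
  then show "paraK V H (c *\<^sub>R x) = c *\<^sub>R paraK V H x"
    using x by (simp add: paraK_add_components scaleR_right_distrib scaleR_right_diff_distrib)
qed

lemma paraK_paraK: "paraK V H (paraK V H x) = x"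
proof -
  obtain v h where x: "v \<in> V" "h \<in> H" "x = v + h" by (rule para_splitting_decomp)
  then show ?thesis
    using linear_diff[OF linear_paraK, of v h] by (simp add: paraK_add_components paraK_V paraK_H)
qed

lemma paraK_fixed_imp_V: "paraK V H x = x \<Longrightarrow> x \<in> V"
proof -
  assume fixed: "paraK V H x = x"
  obtain v h where x: "v \<in> V" "h \<in> H" "x = v + h" by (rule para_splitting_decomp)
  then have "v - h = v + h" using fixed paraK_add_components by simp
  then have "h = 0" by (simp add: vec_eq_iff)
  then show ?thesis using x by simp
qed

lemma paraK_antifixed_imp_H: "paraK V H x = - x \<Longrightarrow> x \<in> H"
proof -
  assume antifixed: "paraK V H x = - x"
  obtain v h where x: "v \<in> V" "h \<in> H" "x = v + h" by (rule para_splitting_decomp)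
  then have "v - h = - (v + h)" using antifixed paraK_add_components by simp
  then have "v = 0" by (simp add: vec_eq_iff)
  then show ?thesis using x by simp
qed

lemma para_proj_V_in: "para_proj_V V H x \<in> V"
  using linear_paraK
  by (intro paraK_fixed_imp_V) (simp add: para_proj_V_def linear_add linear_scale paraK_paraK algebra_simps)

lemma para_proj_H_in: "para_proj_H V H x \<in> H"
  using linear_paraK
  by (intro paraK_antifixed_imp_H) (simp add: para_proj_H_def linear_diff linear_scale paraK_paraK algebra_simps)

lemma para_proj_V_V: "v \<in> V \<Longrightarrow> para_proj_V V H v = v"
  by (simp add: para_proj_V_def paraK_V)

lemma para_proj_H_H: "h \<in> H \<Longrightarrow> para_proj_H V H h = h"
  by (simp add: para_proj_H_def paraK_H)

lemma para_proj_V_H: "h \<in> H \<Longrightarrow> para_proj_V V H h = 0"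
  by (simp add: para_proj_V_def paraK_H)

lemma para_proj_H_V: "v \<in> V \<Longrightarrow> para_proj_H V H v = 0"
  by (simp add: para_proj_H_def paraK_V)

lemma para_proj_V_idem: "para_proj_V V H (para_proj_V V H x) = para_proj_V V H x"
  by (simp add: para_proj_V_V para_proj_V_in)

lemma para_proj_H_idem: "para_proj_H V H (para_proj_H V H x) = para_proj_H V H x"
  by (simp add: para_proj_H_H para_proj_H_in)

lemma para_proj_V_add_H: "para_proj_V V H x + para_proj_H V H x = x"
  by (simp add: para_proj_V_def para_proj_H_def scaleR_add_right[symmetric] del: scaleR_add_right)

lemma paraK_eq_proj_diff: "paraK V H x = para_proj_V V H x - para_proj_H V H x"
  by (simp add: para_proj_V_def para_proj_H_def scaleR_diff_right[symmetric] del: scaleR_diff_right)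

lemma linear_para_proj_V: "linear (para_proj_V V H)"
  using linear_paraK unfolding para_proj_V_def
  by (intro linearI) (simp_all add: linear_add linear_scale algebra_simps)

lemma linear_para_proj_H: "linear (para_proj_H V H)"
  using linear_paraK unfolding para_proj_H_def
  by (intro linearI) (simp_all add: linear_add linear_scale algebra_simps)

end

section \<open>Curvature of a left-invariant parakaehler structure\<close>

lemma pair_symmetry_of_bianchi:
  fixes R :: "'a \<Rightarrow> 'a \<Rightarrow> 'a \<Rightarrow> 'a \<Rightarrow> real"
  assumes skew_left: "\<And>a b c d. R a b c d = - R b a c d"
    and skew_right: "\<And>a b c d. R a b c d = - R a b d c"
    and bianchi: "\<And>a b c d. R a b c d + R b c a d + R c a b d = 0"
  shows "R x y z w = R z w x y"
proof -
  have swap: "R a b c d = R b a d c" for a b c d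
    using skew_left[of a b c d] skew_right[of b a c d] by simp
  \<comment> \<open>Bianchi for the four cyclic arrangements of x y z w, each term normalised by the skew
    symmetries to one of six.\<close>
  have "R x y z w + R y z x w - R x z y w = 0"
    using bianchi[of x y z w] skew_left[of z x y w] by simp
  moreover have "- R y z x w - R z w x y + R y w x z = 0"
    using bianchi[of y z w x] skew_right[of y z w x] skew_right[of z w y x] swap[of w y z x]
    by simp
  moreover have "R z w x y + R x w y z - R x z y w = 0"
    using bianchi[of z w x y] swap[of w x z y] skew_right[of x z w y] by simp
  moreover have "- R x w y z - R x y z w + R y w x z = 0"
    using bianchi[of w x y z] skew_left[of w x y z] skew_right[of x y w z] by simp
  ultimately show ?thesis by linarith
qed

locale parakaehler_lie_algebra =
  fixes br :: "real^'n \<Rightarrow> real^'n \<Rightarrow> real^'n"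
    and V H :: "(real^'n) set"
    and g :: "real^'n \<Rightarrow> real^'n \<Rightarrow> real"
    and D :: "real^'n \<Rightarrow> real^'n \<Rightarrow> real^'n"
  assumes lie_algebra: "lie_algebra br"
    and parakaehler: "left_inv_parakaehler br V H g"
    and levi_civita: "levi_civita br g D"
begin

abbreviation "K \<equiv> paraK V H"
abbreviation "PV \<equiv> para_proj_V V H"
abbreviation "PH \<equiv> para_proj_H V H"
abbreviation "R \<equiv> curvature br D"

lemma split: "para_splitting V H"
  and pseudo_metric: "pseudo_metric g"
  and g_paraK_paraK: "g (K x) (K y) = - g x y"
  using parakaehler unfolding left_inv_parakaehler_def by auto

lemma bilinear_br: "bilinear br"
  and br_self: "br x x = 0"
  and jacobi: "br x (br y z) + br y (br z x) + br z (br x y) = 0"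
  using lie_algebra unfolding lie_algebra_def by auto

lemma bilinear_g: "bilinear g"
  and g_sym: "g x y = g y x"
  and g_nondegenerate: "(\<And>y. g x y = 0) \<Longrightarrow> x = 0"
  using pseudo_metric unfolding pseudo_metric_def by auto

lemma bilinear_D: "bilinear D"
  and D_torsion_free: "D X Y - D Y X = br X Y"
  and D_metric: "g (D X Y) Z + g Y (D X Z) = 0"
  using levi_civita unfolding levi_civita_def by auto

lemma D_parallel_form: "g (K (D X Y)) Z + g (K Y) (D X Z) = 0"
  using parakaehler levi_civita unfolding left_inv_parakaehler_def parakaehler_form_def by auto

lemmas g_bilinear_simps = bilinear_ladd[OF bilinear_g] bilinear_radd[OF bilinear_g]
  bilinear_lsub[OF bilinear_g] bilinear_rsub[OF bilinear_g]
  bilinear_lneg[OF bilinear_g] bilinear_rneg[OF bilinear_g]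
  bilinear_lmul[OF bilinear_g] bilinear_rmul[OF bilinear_g]

lemmas D_bilinear_simps = bilinear_ladd[OF bilinear_D] bilinear_radd[OF bilinear_D]
  bilinear_lsub[OF bilinear_D] bilinear_rsub[OF bilinear_D]
  bilinear_lneg[OF bilinear_D] bilinear_rneg[OF bilinear_D]
  bilinear_lmul[OF bilinear_D] bilinear_rmul[OF bilinear_D]

lemma br_antisym: "br y x = - br x y"
  using br_self[of "x + y"] br_self[of x] br_self[of y]
  by (simp add: bilinear_ladd[OF bilinear_br] bilinear_radd[OF bilinear_br] add_eq_0_iff)

lemma linear_D: "linear (D X)"
  and linear_br: "linear (br X)"
  using bilinear_D bilinear_br by (simp_all add: bilinear_def)

lemmas linear_K = linear_paraK[OF split]
  and K_K = paraK_paraK[OF split]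
  and K_V = paraK_V[OF split]
  and K_H = paraK_H[OF split]
  and K_eq_PV_diff_PH = paraK_eq_proj_diff[OF split]
  and linear_PV = linear_para_proj_V[OF split]
  and linear_PH = linear_para_proj_H[OF split]
  and PV_idem = para_proj_V_idem[OF split]
  and PH_idem = para_proj_H_idem[OF split]
  and PV_add_PH = para_proj_V_add_H[OF split]
  and PV_in = para_proj_V_in[OF split]
  and PH_in = para_proj_H_in[OF split]
  and PV_V = para_proj_V_V[OF split]
  and PH_H = para_proj_H_H[OF split]
  and PV_H = para_proj_V_H[OF split]
  and PH_V = para_proj_H_V[OF split]

lemma g_K_left: "g (K x) y = - g x (K y)"
  using g_paraK_paraK[of x "K y"] K_K by simp

lemma g_eqI: "(\<And>z. g x z = g y z) \<Longrightarrow> x = y"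
  using g_nondegenerate[of "x - y"] by (simp add: g_bilinear_simps)

lemma D_commute_K: "D X (K Y) = K (D X Y)"
proof (rule g_eqI)
  fix Z
  show "g (D X (K Y)) Z = g (K (D X Y)) Z"
    using D_metric[of X "K Y" Z] D_parallel_form[of X Y Z] by linarith
qed

lemma D_V: "v \<in> V \<Longrightarrow> D X v \<in> V"
  by (rule paraK_fixed_imp_V[OF split]) (simp add: D_commute_K[symmetric] K_V)

lemma D_H: "h \<in> H \<Longrightarrow> D X h \<in> H"
  by (rule paraK_antifixed_imp_H[OF split]) (simp add: D_commute_K[symmetric] K_H D_bilinear_simps)

lemma br_V: "v \<in> V \<Longrightarrow> v' \<in> V \<Longrightarrow> br v v' \<in> V"
  using D_torsion_free[of v v'] D_V split
  by (metis para_splitting_def subspace_diff)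

lemma br_H: "h \<in> H \<Longrightarrow> h' \<in> H \<Longrightarrow> br h h' \<in> H"
  using D_torsion_free[of h h'] D_H split
  by (metis para_splitting_def subspace_diff)

lemma g_PH_left: "g (PH x) y = g x (PV y)"
  by (simp add: para_proj_H_def para_proj_V_def g_bilinear_simps g_K_left)

lemma trace_PH_D: "trace (matrix (\<lambda>x. PH (D W x))) = - trace (matrix (\<lambda>x. PV (D W x)))"
proof -
  have linear_D_PV: "linear (\<lambda>y. D W (PV y))"
    using linear_compose[OF linear_PV linear_D] by (simp add: o_def)
  have "trace (matrix (\<lambda>x. PH (D W x))) = trace (matrix (\<lambda>y. - D W (PV y)))"
  proof (rule trace_matrix_adjoint[OF pseudo_metric])
    show "linear (\<lambda>y. - D W (PV y))" using linear_compose_neg[OF linear_D_PV] by simp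
    show "g (PH (D W x)) y = g x (- D W (PV y))" for x y
      using D_metric[of W x "PV y"] by (simp add: g_PH_left g_bilinear_simps)
  qed
  also have "\<dots> = - trace (matrix (\<lambda>x. PV (D W x)))"
    using trace_matrix_compose_commute[OF linear_D linear_PV]
    by (simp add: trace_matrix_neg)
  finally show ?thesis .
qed

lemma linear_curvature: "linear (R X Y)"
  by (intro linearI) (simp_all add: curvature_def D_bilinear_simps algebra_simps)

lemma linear_curvature_left: "linear (\<lambda>X. R X Y Z)"
  by (intro linearI)
    (simp_all add: curvature_def D_bilinear_simps bilinear_ladd[OF bilinear_br]
      bilinear_lmul[OF bilinear_br] algebra_simps)

lemma curvature_commute_K: "R X Y (K Z) = K (R X Y Z)"
  by (simp add: curvature_def D_commute_K linear_diff[OF linear_K])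

lemma curvature_antisym: "R Y X Z = - R X Y Z"
  by (simp add: curvature_def br_antisym[of Y X] D_bilinear_simps)

lemma g_D_antisym: "g (D X Y) Z = - g Y (D X Z)"
  using D_metric[of X Y Z] by linarith

lemma g_curvature_antisym: "g (R X Y Z) W = - g Z (R X Y W)"
  by (simp add: curvature_def g_bilinear_simps g_D_antisym)

lemma curvature_bianchi: "R X Y Z + R Y Z X + R Z X Y = 0"
proof -
  have cyclic_term: "D X (D Y Z - D Z Y) - D (br Y Z) X = br X (br Y Z)" for X Y Z
    using D_torsion_free[of X "br Y Z"] D_torsion_free[of Y Z] by simp
  have "R X Y Z + R Y Z X + R Z X Y =
      (D X (D Y Z - D Z Y) - D (br Y Z) X) + (D Y (D Z X - D X Z) - D (br Z X) Y)
      + (D Z (D X Y - D Y X) - D (br X Y) Z)"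
    by (simp add: curvature_def D_bilinear_simps algebra_simps)
  then show ?thesis by (simp only: cyclic_term jacobi)
qed

lemma g_curvature_pair_sym: "g (R X Y Z) W = g (R Z W X) Y"
proof (rule pair_symmetry_of_bianchi[where R="\<lambda>a b c d. g (R a b c) d"])
  show "g (R a b c) d = - g (R b a c) d" for a b c d
    by (simp add: curvature_antisym[of a b] g_bilinear_simps)
  show "g (R a b c) d = - g (R a b d) c" for a b c d
    by (simp add: g_curvature_antisym g_sym[of c])
  show "g (R a b c) d + g (R b c a) d + g (R c a b) d = 0" for a b c d
    using arg_cong[OF curvature_bianchi[of a b c], of "\<lambda>v. g v d"]
    by (simp add: g_bilinear_simps bilinear_lzero[OF bilinear_g])
qed

lemma curvature_K_K: "R (K X) (K Y) Z = - R X Y Z"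
proof (rule g_eqI)
  fix W
  have "g (R (K X) (K Y) Z) W = g (R Z W (K X)) (K Y)" by (rule g_curvature_pair_sym)
  also have "\<dots> = - g (R Z W X) Y" by (simp add: curvature_commute_K g_paraK_paraK)
  also have "\<dots> = g (- R X Y Z) W" by (simp add: g_curvature_pair_sym[of X] g_bilinear_simps)
  finally show "g (R (K X) (K Y) Z) W = g (- R X Y Z) W" .
qed

lemma trace_curvature: "trace (matrix (R X Y)) = 0"
  using pseudo_metric linear_curvature
  by (rule trace_matrix_skew_adjoint) (simp add: g_curvature_antisym)

lemma ricci_sym: "ricci br D Y Z = ricci br D Z Y"
proof -
  have "R X Z Y = R X Y Z + R Y Z X" for X
    using curvature_bianchi[of X Z Y] curvature_antisym[of Z Y X] curvature_antisym[of Y X Z]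
    by (simp add: algebra_simps eq_neg_iff_add_eq_0)
  then have "ricci br D Z Y = ricci br D Y Z + trace (matrix (R Y Z))"
    by (simp add: ricci_def trace_matrix_add)
  then show ?thesis by (simp add: trace_curvature)
qed

lemma ricci_K_K: "ricci br D (K Y) (K Z) = - ricci br D Y Z"
proof -
  define f where "f X = R X (K Y) (K Z)" for X
  have "linear f" unfolding f_def by (rule linear_curvature_left)
  then have "linear (\<lambda>X. f (K X))"
    using linear_compose[OF linear_K] by (simp add: o_def)
  then have "trace (matrix (\<lambda>X. f (K (K X)))) = trace (matrix (\<lambda>X. K (f (K X))))"
    by (rule trace_matrix_compose_commute[OF _ linear_K])
  moreover have "K (f (K X)) = - R X Y Z" for X
    by (simp add: f_def curvature_commute_K[symmetric] K_K curvature_K_K linear_neg[OF linear_K])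
  ultimately show ?thesis
    by (simp add: ricci_def f_def K_K trace_matrix_neg)
qed

lemma trace_K_curvature:
  "trace (matrix (\<lambda>A. K (R X Y A))) = - trace (matrix (\<lambda>A. K (D (br X Y) A)))"
proof -
  have linear_K_D: "linear (\<lambda>A. K (D X A))" for X
    using linear_compose[OF linear_D linear_K] by (simp add: o_def)
  have "trace (matrix (\<lambda>A. K (D X (D Y A)))) = trace (matrix (\<lambda>A. D X (K (D Y A))))"
    by (simp add: D_commute_K)
  also have "\<dots> = trace (matrix (\<lambda>A. K (D Y (D X A))))"
    by (rule trace_matrix_compose_commute[OF linear_D linear_K_D])
  finally show ?thesis
    by (simp add: curvature_def linear_diff[OF linear_K] trace_matrix_diff)
qed

lemma twice_ricci_eq_trace_K_curvature:
  "2 * ricci br D Y Z = - trace (matrix (\<lambda>A. K (R Y (K Z) A)))"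
proof -
  have "R X Y Z = R X (K Z) (K Y) - K (R Y (K Z) X)" for X
  proof -
    have "R X Y Z = K (R X Y (K Z))" by (simp add: curvature_commute_K K_K)
    also have "R X Y (K Z) = - R Y (K Z) X - R (K Z) X Y"
      using curvature_bianchi[of X Y "K Z"] by (simp add: algebra_simps eq_neg_iff_add_eq_0)
    finally show ?thesis
      by (simp add: linear_diff[OF linear_K] linear_neg[OF linear_K]
          curvature_commute_K[symmetric] curvature_antisym[of "K Z"])
  qed
  then have "ricci br D Y Z = trace (matrix (\<lambda>X. R X (K Z) (K Y) - K (R Y (K Z) X)))"
    by (simp add: ricci_def)
  also have "\<dots> = ricci br D (K Z) (K Y) - trace (matrix (\<lambda>A. K (R Y (K Z) A)))"
    unfolding ricci_def by (rule trace_matrix_diff)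
  finally have "ricci br D Y Z = ricci br D (K Z) (K Y) - trace (matrix (\<lambda>A. K (R Y (K Z) A)))" .
  then show ?thesis by (simp add: ricci_K_K ricci_sym[of Z])
qed

end

section \<open>Nilpotent Lie algebras\<close>

lemma nilpotent_lie_algebra_ad_nilpotent:
  assumes "nilpotent_lie_algebra br"
  obtains m where "\<And>x. (br h ^^ m) x = 0"
proof -
  obtain k where "lcs br k = {0}"
    using assms unfolding nilpotent_lie_algebra_def by blast
  moreover have "(br h ^^ j) x \<in> lcs br j" for j x
    by (induction j) (auto intro!: span_base)
  ultimately show ?thesis using that by blast
qed

locale nilpotent_parakaehler_lie_algebra = parakaehler_lie_algebra +
  assumes nilpotent: "nilpotent_lie_algebra br"
begin

lemma trace_PV_D_H:
  assumes "h \<in> H"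
  shows "trace (matrix (\<lambda>x. PV (D h x))) = 0"
proof -
  obtain m where nil: "\<And>x. (br h ^^ m) x = 0"
    using nilpotent_lie_algebra_ad_nilpotent[OF nilpotent] by blast
  have "trace (matrix (\<lambda>x. PV (D h x))) = trace (matrix (\<lambda>x. PV (D h (PV x))))"
    by (rule trace_matrix_compress_projection[OF linear_PV linear_D PV_idem])
  also have "\<dots> = trace (matrix (\<lambda>x. PV (br h (PV x))))"
  proof -
    have "D h (PV x) = D (PV x) h + br h (PV x)" for x
      using D_torsion_free[of h "PV x"] by (simp add: algebra_simps)
    moreover have "PV (D (PV x) h) = 0" for x
      using PV_H[OF D_H[OF assms]] .
    ultimately show ?thesis by (simp add: linear_add[OF linear_PV])
  qed
  also have "\<dots> = trace (matrix (br h)) - trace (matrix (\<lambda>x. PH (br h (PH x))))"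
    using trace_matrix_split_projections[OF linear_PV linear_PH linear_br PV_idem PH_idem PV_add_PH]
    by simp
  also have "\<dots> = 0"
    using trace_matrix_nilpotent[OF linear_br nil]
      trace_matrix_nilpotent_compression[OF linear_br linear_PH PH_in PH_H br_H[OF assms] nil]
    by simp
  finally show ?thesis .
qed

lemma trace_PH_D_V:
  assumes "v \<in> V"
  shows "trace (matrix (\<lambda>x. PH (D v x))) = 0"
proof -
  obtain m where nil: "\<And>x. (br v ^^ m) x = 0"
    using nilpotent_lie_algebra_ad_nilpotent[OF nilpotent] by blast
  have "trace (matrix (\<lambda>x. PH (D v x))) = trace (matrix (\<lambda>x. PH (D v (PH x))))"
    by (rule trace_matrix_compress_projection[OF linear_PH linear_D PH_idem])
  also have "\<dots> = trace (matrix (\<lambda>x. PH (br v (PH x))))"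
  proof -
    have "D v (PH x) = D (PH x) v + br v (PH x)" for x
      using D_torsion_free[of v "PH x"] by (simp add: algebra_simps)
    moreover have "PH (D (PH x) v) = 0" for x
      using PH_V[OF D_V[OF assms]] .
    ultimately show ?thesis by (simp add: linear_add[OF linear_PH])
  qed
  also have "\<dots> = trace (matrix (br v)) - trace (matrix (\<lambda>x. PV (br v (PV x))))"
    using trace_matrix_split_projections[OF linear_PV linear_PH linear_br PV_idem PH_idem PV_add_PH]
    by simp
  also have "\<dots> = 0"
    using trace_matrix_nilpotent[OF linear_br nil]
      trace_matrix_nilpotent_compression[OF linear_br linear_PV PV_in PV_V br_V[OF assms] nil]
    by simp
  finally show ?thesis .
qed

lemma trace_K_D: "trace (matrix (\<lambda>x. K (D W x))) = 0"
proof -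
  have "D W x = D (PV W) x + D (PH W) x" for x
    using PV_add_PH[of W] by (metis D_bilinear_simps(1))
  then have "trace (matrix (\<lambda>x. PV (D W x)))
      = trace (matrix (\<lambda>x. PV (D (PV W) x))) + trace (matrix (\<lambda>x. PV (D (PH W) x)))"
    by (simp add: linear_add[OF linear_PV] trace_matrix_add)
  also have "\<dots> = 0"
    using trace_PH_D[of "PV W"] trace_PH_D_V[OF PV_in] trace_PV_D_H[OF PH_in] by simp
  finally show ?thesis
    using trace_PH_D[of W] by (simp add: K_eq_PV_diff_PH trace_matrix_diff)
qed

end

theorem corollary8p2:
  fixes br :: "real^'n \<Rightarrow> real^'n \<Rightarrow> real^'n"
    and V H :: "(real^'n) set"
    and g :: "real^'n \<Rightarrow> real^'n \<Rightarrow> real"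
    and D :: "real^'n \<Rightarrow> real^'n \<Rightarrow> real^'n"
  assumes "nilpotent_lie_algebra br"
    and "left_inv_parakaehler br V H g"
    and "levi_civita br g D"
  shows "\<forall>Y Z. ricci br D Y Z = 0"
proof (intro allI)
  fix Y Z
  interpret nilpotent_parakaehler_lie_algebra br V H g D
    using assms by unfold_locales (simp_all add: nilpotent_lie_algebra_def)
  have "2 * ricci br D Y Z = trace (matrix (\<lambda>A. K (D (br Y (K Z)) A)))"
    by (simp add: twice_ricci_eq_trace_K_curvature trace_K_curvature)
  also have "\<dots> = 0" by (rule trace_K_D)
  finally show "ricci br D Y Z = 0" by simp
qed

end
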